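(* Fix range parameters $0<L_I\le U_I$ and $0\le L_V\le U_V$, and let $\alpha=(a_1,\dots,a_w)$. Let $a_i,a_j\in\mathbb{L}^{t+1}_\alpha$ with $a_i$ to the left of $a_j$. Suppose both have leftmost partially-proper items, $a_{i'}$ and $a_{j'}$ respectively, in $\mathbb{L}^t_\alpha$. Then $a_{i'}$ equals $a_{j'}$ or is to the left of $a_{j'}$.
   Context: Let $\alpha=(a_1,\dots,a_w)$ be a finite sequence of real numbers, with items identified by their positions. Increasing subsequences are non-strict. $a_j$ is compatible with $a_i$ if $j<i$ and $a_j\le a_i$. $RL_\alpha(a)$ is the maximum length of an increasing subsequence ending at $a$. $a_j$ is a predecessor of $a_i$ if it is compatible with $a_i$ and $RL_\alpha(a_j)=RL_\alpha(a_i)-1$. The horizontal list $\mathbb{L}^t_\alpha$ is the list of items of rising length $t$, ordered by position; "left of" means earlier position. Items are colored black or non-black recursively by level: all items of $\mathbb{L}^1_\alpha$ are non-black, and an item of $\mathbb{L}^{t+1}_\alpha$ is non-black iff it has a range-proper predecessor. Here a range-proper predecessor of $a_i$ is a non-black predecessor $a_k$ with $L_V\le a_i-a_k\le U_V$ and $L_I\le i-k\le U_I$. For $a_i\in\mathbb{L}^{t+1}_\alpha$, its leftmost partially-proper item is the leftmost non-black item $a_k\in\mathbb{L}^t_\alpha$ with $L_V\le a_i-a_k$ and $i-k\le U_I$, if one exists. *)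

theory Defs
  imports Complex_Main
begin

text \<open>The sequence alpha = (a_1,...,a_w) is a function a :: nat => real together with
its length w; items are identified with their positions i in {1..w}.\<close>

definition compatible :: "(nat \<Rightarrow> real) \<Rightarrow> nat \<Rightarrow> nat \<Rightarrow> nat \<Rightarrow> bool" where
  "compatible a w j i \<longleftrightarrow> j \<in> {1..w} \<and> i \<in> {1..w} \<and> j < i \<and> a j \<le> a i"

definition incr_subseq_ending :: "(nat \<Rightarrow> real) \<Rightarrow> nat \<Rightarrow> nat list \<Rightarrow> nat \<Rightarrow> bool" where
  "incr_subseq_ending a w js i \<longleftrightarrow> js \<noteq> [] \<and> sorted_wrt (<) js \<and> set js \<subseteq> {1..w}
      \<and> last js = i \<and> sorted (map a js)"

definition RL :: "(nat \<Rightarrow> real) \<Rightarrow> nat \<Rightarrow> nat \<Rightarrow> nat" where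
  "RL a w i = Max {length js | js. incr_subseq_ending a w js i}"

definition predecessor :: "(nat \<Rightarrow> real) \<Rightarrow> nat \<Rightarrow> nat \<Rightarrow> nat \<Rightarrow> bool" where
  "predecessor a w j i \<longleftrightarrow> compatible a w j i \<and> RL a w j = RL a w i - 1"

definition hlist :: "(nat \<Rightarrow> real) \<Rightarrow> nat \<Rightarrow> nat \<Rightarrow> nat set" where
  "hlist a w t = {i \<in> {1..w}. RL a w i = t}"

text \<open>Since predecessors lie at lower levels,
this recursion is well-founded and coincides with the least fixed point below.\<close>
inductive nonblack :: "(nat \<Rightarrow> real) \<Rightarrow> nat \<Rightarrow> real \<Rightarrow> real \<Rightarrow> real \<Rightarrow> real \<Rightarrow> nat \<Rightarrow> bool"
  for a w LV UV LI UI where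
  level1: "i \<in> hlist a w 1 \<Longrightarrow> nonblack a w LV UV LI UI i"
| step: "nonblack a w LV UV LI UI k \<Longrightarrow> predecessor a w k i \<Longrightarrow>
         LV \<le> a i - a k \<Longrightarrow> a i - a k \<le> UV \<Longrightarrow>
         LI \<le> real i - real k \<Longrightarrow> real i - real k \<le> UI \<Longrightarrow>
         nonblack a w LV UV LI UI i"

definition range_proper_pred :: "(nat \<Rightarrow> real) \<Rightarrow> nat \<Rightarrow> real \<Rightarrow> real \<Rightarrow> real \<Rightarrow> real \<Rightarrow> nat \<Rightarrow> nat \<Rightarrow> bool" where
  "range_proper_pred a w LV UV LI UI k i \<longleftrightarrow> nonblack a w LV UV LI UI k \<and> predecessor a w k i
     \<and> LV \<le> a i - a k \<and> a i - a k \<le> UV \<and> LI \<le> real i - real k \<and> real i - real k \<le> UI"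

definition partially_proper :: "(nat \<Rightarrow> real) \<Rightarrow> nat \<Rightarrow> real \<Rightarrow> real \<Rightarrow> real \<Rightarrow> real \<Rightarrow> nat \<Rightarrow> nat \<Rightarrow> nat \<Rightarrow> bool" where
  "partially_proper a w LV UV LI UI t k i \<longleftrightarrow> k \<in> hlist a w t \<and> nonblack a w LV UV LI UI k
     \<and> LV \<le> a i - a k \<and> real i - real k \<le> UI"

definition leftmost_pp :: "(nat \<Rightarrow> real) \<Rightarrow> nat \<Rightarrow> real \<Rightarrow> real \<Rightarrow> real \<Rightarrow> real \<Rightarrow> nat \<Rightarrow> nat \<Rightarrow> nat \<Rightarrow> bool" where
  "leftmost_pp a w LV UV LI UI t k i \<longleftrightarrow> partially_proper a w LV UV LI UI t k i
     \<and> (\<forall>k'. partially_proper a w LV UV LI UI t k' i \<longrightarrow> k \<le> k')"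

end

theory Submission
  imports Defs
begin

text \<open>Two items of the same level L^(t+1) with a_i left of a_j cannot satisfy a_i <= a_j,
since otherwise any increasing subsequence ending at a_i extends by a_j, raising its rising
length. Hence a_j < a_i, so a partially-proper item of a_j is also one of a_i (both
inequalities defining it only get easier when moving from j to i), and the leftmost one of
a_i lies at or left of that of a_j.\<close>

lemma finite_incr_subseq_lengths: "finite {length js | js. incr_subseq_ending a w js i}"
proof (rule finite_subset)
  show "{length js | js. incr_subseq_ending a w js i} \<subseteq> {..w}"
  proof
    fix n assume "n \<in> {length js | js. incr_subseq_ending a w js i}"
    then obtain js where n: "n = length js" and js: "incr_subseq_ending a w js i" by blast
    then have "distinct js" "set js \<subseteq> {1..w}"
      unfolding incr_subseq_ending_def using strict_sorted_iff by blast+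
    then show "n \<in> {..w}"
      using n card_mono[of "{1..w}" "set js"] distinct_card by fastforce
  qed
qed simp

lemma RL_attained:
  assumes "i \<in> {1..w}"
  obtains js where "incr_subseq_ending a w js i" "length js = RL a w i"
proof -
  have "incr_subseq_ending a w [i] i"
    using assms unfolding incr_subseq_ending_def by auto
  then have "{length js | js. incr_subseq_ending a w js i} \<noteq> {}" by blast
  from Max_in[OF finite_incr_subseq_lengths this] show thesis
    using that unfolding RL_def by auto
qed

lemma length_le_RL: "incr_subseq_ending a w js i \<Longrightarrow> length js \<le> RL a w i"
  unfolding RL_def by (intro Max_ge[OF finite_incr_subseq_lengths]) blast

lemma incr_subseq_ending_snoc:
  assumes "incr_subseq_ending a w js i" and "compatible a w i j"
  shows "incr_subseq_ending a w (js @ [j]) j"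
proof -
  have js: "js = butlast js @ [i]"
    using assms(1) unfolding incr_subseq_ending_def by (metis append_butlast_last_id)
  have "sorted_wrt (<) (butlast js @ [i])" "sorted (map a (butlast js @ [i]))"
    using assms(1) js unfolding incr_subseq_ending_def by metis+
  then have "\<forall>x\<in>set (butlast js). x \<le> i \<and> a x \<le> a i"
    by (auto simp: sorted_wrt_append sorted_append)
  then have "\<forall>x\<in>set js. x \<le> i \<and> a x \<le> a i"
    by (subst js) simp
  then show ?thesis
    using assms unfolding incr_subseq_ending_def compatible_def
    by (auto simp: sorted_wrt_append sorted_append intro: le_less_trans order_trans)
qed

lemma RL_less_if_compatible:
  assumes "compatible a w i j"
  shows "RL a w i < RL a w j"
proof -
  obtain js where js: "incr_subseq_ending a w js i" "length js = RL a w i"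
    using assms RL_attained unfolding compatible_def by blast
  from length_le_RL[OF incr_subseq_ending_snoc[OF js(1) assms]] js(2) show ?thesis by simp
qed

lemma hlist_left_item_greater:
  assumes "i \<in> hlist a w t" and "j \<in> hlist a w t" and "i < j"
  shows "a j < a i"
proof (rule ccontr)
  assume "\<not> a j < a i"
  then have "compatible a w i j"
    using assms unfolding hlist_def compatible_def by auto
  then show False
    using RL_less_if_compatible assms unfolding hlist_def by fastforce
qed

lemma partially_proper_to_left:
  assumes "partially_proper a w LV UV LI UI t k j" and "i < j" and "a j \<le> a i"
  shows "partially_proper a w LV UV LI UI t k i"
  using assms unfolding partially_proper_def by auto

theorem mainTheorem14:
  fixes a :: "nat \<Rightarrow> real" and w t i j i' j' :: nat and LI UI LV UV :: real
  assumes "0 < LI" and "LI \<le> UI" and "0 \<le> LV" and "LV \<le> UV"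
    and "i \<in> hlist a w (t + 1)" and "j \<in> hlist a w (t + 1)" and "i < j"
    and "leftmost_pp a w LV UV LI UI t i' i"
    and "leftmost_pp a w LV UV LI UI t j' j"
  shows "i' \<le> j'"
proof -
  have "a j < a i" using hlist_left_item_greater assms(5-7) .
  moreover have "partially_proper a w LV UV LI UI t j' j"
    using assms(9) unfolding leftmost_pp_def by simp
  ultimately have "partially_proper a w LV UV LI UI t j' i"
    using partially_proper_to_left assms(7) by fastforce
  then show ?thesis using assms(8) unfolding leftmost_pp_def by blast
qed

end
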